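(* For every real $\eta > -1$, $$\frac{\pi}{4} = \frac{ {}_{3}F_{2}\left[ \begin{matrix} -\eta, \frac{1}{2}, 1 \\ \frac{3}{2}, 2 + \eta \end{matrix} \ \Bigg| \ -1 \right] }{ {}_{3}F_{2}\left[ \begin{matrix} \frac{1}{2}, \frac{1}{2}, 1 + \eta \\ 1, 2 + \eta \end{matrix} \ \Bigg| \ 1 \right]}.$$
   Context: ${}_pF_q\left[\begin{matrix} a_1,\dots,a_p\\ b_1,\dots,b_q\end{matrix}\,\Big|\, z\right] = \sum_{n\ge 0} \frac{(a_1)_n\cdots(a_p)_n}{(b_1)_n\cdots(b_q)_n}\frac{z^n}{n!}$ is the generalized hypergeometric series, where $(x)_n = \Gamma(x+n)/\Gamma(x)$ is the Pochhammer symbol. *)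

theory Defs
  imports "HOL-Analysis.Analysis"
begin

definition hypergeom :: "real list \<Rightarrow> real list \<Rightarrow> real \<Rightarrow> real" where
  "hypergeom as bs z =
     (\<Sum>n. (\<Prod>a\<leftarrow>as. pochhammer a n) / (\<Prod>b\<leftarrow>bs. pochhammer b n) * z ^ n / fact n)"

end

theory Submission
  imports Defs
begin

(* Write the coefficients of the numerator through Beta integrals,
   ((1+eta) B(1+eta, n+1) = n!/(2+eta)_n  and  1/(2n+1) = int_0^1 x^(2n) dx);
   summing the generalized binomial series under the integrals gives
     numerator = (1+eta) int_0^1 int_0^1 w^eta (1 + (1-w) x^2)^eta dw dx.
   The series converges absolutely at -1 because (-eta)_n/(2+eta)_n = O(n^(-2 eta - 2)).
   The substitution t = w (1 + (1-w) x^2) turns the inner integral into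
   int_0^1 t^eta / sqrt((1+x^2)^2 - 4 x^2 t) dt.  After exchanging the integrations,
   y = 4 x^2/(1+x^2)^2 turns the x-integral into
   1/4 int_0^1 y^(-1/2) (1-y)^(-1/2) (1-ty)^(-1/2) dy = pi/4 sum_m c_m^2 t^m,
   with c_m = (1/2)_m/m! the coefficients of (1-z)^(-1/2).  Integrating against t^eta
   yields pi/4 sum_m c_m^2 (1+eta)/(1+eta+m), i.e. pi/4 times the denominator. *)

lemma pochhammer_over_pochhammer_plus1:
  fixes a :: real
  assumes "a > 0"
  shows "pochhammer a n / pochhammer (a + 1) n = a / (a + real n)"
proof -
  have "pochhammer a n * (a + real n) = a * pochhammer (a + 1) n"
    by (metis pochhammer_Suc pochhammer_rec)
  moreover have "pochhammer (a + 1) n > 0" "a + real n > 0"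
    using assms by (auto intro: pochhammer_pos)
  ultimately show ?thesis
    by (simp add: field_simps)
qed

lemma fact_over_pochhammer_eq_Beta:
  fixes a :: real
  assumes "a > 0"
  shows "fact n / pochhammer (a + 1) n = a * Beta a (real n + 1)"
proof -
  have a: "a \<notin> \<int>\<^sub>\<le>\<^sub>0" "a + 1 \<notin> \<int>\<^sub>\<le>\<^sub>0"
    using assms by (auto elim!: nonpos_Ints_cases)
  have "pochhammer (a + 1) n = Gamma (a + 1 + real n) / Gamma (a + 1)"
    by (rule pochhammer_Gamma[OF a(2)])
  moreover have "Gamma (a + 1) = a * Gamma a"
    by (rule Gamma_plus1[OF a(1)])
  ultimately have poch: "pochhammer (a + 1) n = Gamma (a + real n + 1) / (a * Gamma a)"
    by (simp add: add_ac)
  have "Gamma (real n + 1) = fact n"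
    using Gamma_fact[of n] by (simp add: add.commute)
  moreover have "Gamma a > 0" "Gamma (a + real n + 1) > 0"
    using assms by auto
  ultimately show ?thesis
    using assms unfolding poch Beta_def by (simp add: field_simps add_ac)
qed

lemma Beta_one_right:
  fixes a :: real
  assumes "a > 0"
  shows "Beta a 1 = 1 / a"
proof -
  have "Gamma (a + 1) = a * Gamma a"
    using assms by (intro Gamma_plus1) (auto elim!: nonpos_Ints_cases)
  moreover have "Gamma a > 0"
    using assms by simp
  ultimately show ?thesis
    by (simp add: Beta_def)
qed

definition invsqrt_coeff :: "nat \<Rightarrow> real" where
  "invsqrt_coeff m = pochhammer (1/2) m / fact m"

lemma invsqrt_coeff_nonneg: "invsqrt_coeff m \<ge> 0"
  unfolding invsqrt_coeff_def by (simp add: pochhammer_nonneg)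

lemma invsqrt_coeff_sums:
  fixes z :: real
  assumes "\<bar>z\<bar> < 1"
  shows "(\<lambda>m. invsqrt_coeff m * z ^ m) sums (1 - z) powr (-1/2)"
proof -
  have "((-1/2) gchoose m) * (-z) ^ m = invsqrt_coeff m * z ^ m" for m
  proof -
    have "((-1/2::real) gchoose m) * (-z) ^ m = ((-1) ^ m * (-1) ^ m) * (pochhammer (1/2) m / fact m) * z ^ m"
      by (simp add: gbinomial_pochhammer power_minus[of z])
    then show ?thesis
      by (simp add: invsqrt_coeff_def flip: power_mult_distrib)
  qed
  then show ?thesis
    using gen_binomial_real[of "-z" "-1/2"] assms by simp
qed

lemma Beta_nat_plus_half_half: "Beta (real m + 1/2) (1/2) = pi * invsqrt_coeff m"
proof -
  have "pochhammer (1/2) m = Gamma (real m + 1/2) / Gamma (1/2)"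
    by (subst pochhammer_Gamma) (auto elim!: nonpos_Ints_cases simp: add.commute)
  then have Gamma: "Gamma (real m + 1/2) = pochhammer (1/2) m * sqrt pi"
    by (simp add: Gamma_one_half_real)
  have "Gamma (real m + 1/2 + 1/2) = fact m"
    using Gamma_fact[of m] by (simp add: add_ac)
  then have "Beta (real m + 1/2) (1/2) = pochhammer (1/2) m * (sqrt pi * sqrt pi) / fact m"
    by (simp add: Beta_def Gamma Gamma_one_half_real mult.assoc)
  then show ?thesis
    by (simp add: invsqrt_coeff_def)
qed

lemma hypergeom_numerator_eq_series:
  fixes e :: real
  assumes "e > -1"
  shows "hypergeom [-e, 1/2, 1] [3/2, 2 + e] (-1) =
     (\<Sum>n. (e gchoose n) * ((e + 1) * Beta (e + 1) (real n + 1)) / (2 * real n + 1))"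
  unfolding hypergeom_def
proof (intro arg_cong[where f = suminf] ext)
  fix n
  have half_ratio: "pochhammer (1/2) n / pochhammer (3/2) n = 1 / (2 * real n + 1)"
    using pochhammer_over_pochhammer_plus1[of "1/2" n] by (simp add: field_simps)
  have Beta_ratio: "fact n / pochhammer (2 + e) n = (e + 1) * Beta (e + 1) (real n + 1)"
    using fact_over_pochhammer_eq_Beta[of "e + 1" n] assms by (simp add: add_ac)
  have "pochhammer (2 + e) n > 0" "pochhammer (3/2::real) n > 0"
    using assms by (auto intro: pochhammer_pos)
  then have "(\<Prod>a\<leftarrow>[-e, 1/2, 1]. pochhammer a n) / (\<Prod>b\<leftarrow>[3/2, 2 + e]. pochhammer b n) * (-1) ^ n / fact n
     = ((-1) ^ n * pochhammer (-e) n / fact n) * (fact n / pochhammer (2 + e) n) *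
        (pochhammer (1/2) n / pochhammer (3/2) n)"
    by (simp add: pochhammer_fact[symmetric] field_simps)
  then show "(\<Prod>a\<leftarrow>[-e, 1/2, 1]. pochhammer a n) / (\<Prod>b\<leftarrow>[3/2, 2 + e]. pochhammer b n) * (-1) ^ n / fact n
     = (e gchoose n) * ((e + 1) * Beta (e + 1) (real n + 1)) / (2 * real n + 1)"
    by (simp add: half_ratio Beta_ratio gbinomial_pochhammer)
qed

lemma hypergeom_denominator_eq_series:
  fixes e :: real
  assumes "e > -1"
  shows "hypergeom [1/2, 1/2, 1 + e] [1, 2 + e] 1 =
     (\<Sum>m. invsqrt_coeff m ^ 2 * ((1 + e) / (1 + e + real m)))"
  unfolding hypergeom_def
proof (intro arg_cong[where f = suminf] ext)
  fix n
  have "pochhammer (1 + e) n / pochhammer (2 + e) n = (1 + e) / (1 + e + real n)"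
    using pochhammer_over_pochhammer_plus1[of "1 + e" n] assms by (simp add: add_ac)
  moreover have "(\<Prod>a\<leftarrow>[1/2, 1/2, 1 + e]. pochhammer a n) / (\<Prod>b\<leftarrow>[1, 2 + e]. pochhammer b n) * 1 ^ n / fact n
     = (pochhammer (1/2) n / fact n) ^ 2 * (pochhammer (1 + e) n / pochhammer (2 + e) n)"
    by (simp add: pochhammer_fact[symmetric] power2_eq_square mult_ac)
  ultimately show "(\<Prod>a\<leftarrow>[1/2, 1/2, 1 + e]. pochhammer a n) / (\<Prod>b\<leftarrow>[1, 2 + e]. pochhammer b n) * 1 ^ n / fact n
     = invsqrt_coeff n ^ 2 * ((1 + e) / (1 + e + real n))"
    by (simp add: invsqrt_coeff_def)
qed

lemma summable_abs_pochhammer_ratio: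
  fixes a b :: real
  assumes b: "b > 0" and ab: "a < b"
  shows "summable (\<lambda>n. \<bar>pochhammer a n / pochhammer b n\<bar> / (real n + 1))"
proof -
  (* (z)_(n+1) = n! n^z rGamma_series z n with rGamma_series z n -> 1/Gamma z, so the ratio is O(n^(a-b)) *)
  define L where "L = \<bar>rGamma a\<bar> / rGamma b"
  have "rGamma b > 0"
    using b by (simp add: rGamma_inverse_Gamma)
  then have "(\<lambda>n. \<bar>rGamma_series a n\<bar> / rGamma_series b n) \<longlonglongrightarrow> L"
    unfolding L_def by (intro tendsto_intros) auto
  then have "eventually (\<lambda>n. \<bar>rGamma_series a n\<bar> / rGamma_series b n < L + 1) sequentially"
    by (rule order_tendstoD) simp
  then have "eventually (\<lambda>n. norm (\<bar>pochhammer a (Suc n) / pochhammer b (Suc n)\<bar> / (real (Suc n) + 1))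
      \<le> (L + 1) * real n powr (a - b - 1)) sequentially"
    using eventually_gt_at_top[of "0::nat"]
  proof eventually_elim
    case (elim n)
    have rGs: "rGamma_series b n > 0"
      using b unfolding rGamma_series_def by (auto intro!: divide_pos_pos pochhammer_pos)
    have L1: "L + 1 > 0"
      unfolding L_def using \<open>rGamma b > 0\<close> by (auto intro: add_nonneg_pos)
    have "\<bar>pochhammer a (Suc n) / pochhammer b (Suc n)\<bar>
        = \<bar>rGamma_series a n\<bar> / rGamma_series b n * real n powr (a - b)"
      using elim(2) rGs
      by (simp add: rGamma_series_def powr_def exp_diff abs_mult field_simps left_diff_distrib)
    also have "\<dots> \<le> (L + 1) * real n powr (a - b)"
      using elim(1) by (intro mult_right_mono) auto
    finally have "\<bar>pochhammer a (Suc n) / pochhammer b (Suc n)\<bar> / (real (Suc n) + 1)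
        \<le> (L + 1) * real n powr (a - b) / real n"
      using elim(2) L1 by (intro frac_le) auto
    also have "\<dots> = (L + 1) * real n powr (a - b - 1)"
      using elim(2) by (simp add: powr_diff)
    finally show ?case
      by simp
  qed
  moreover have "summable (\<lambda>n. (L + 1) * real n powr (a - b - 1))"
    using ab by (intro summable_mult) (simp add: summable_real_powr_iff)
  ultimately have "summable (\<lambda>n. \<bar>pochhammer a (Suc n) / pochhammer b (Suc n)\<bar> / (real (Suc n) + 1))"
    by (rule summable_comparison_test_ev)
  then show ?thesis
    by (subst summable_Suc_iff[symmetric])
qed

lemma summable_abs_gbinomial:
  fixes e z :: real
  assumes "\<bar>z\<bar> < 1"
  shows "summable (\<lambda>n. \<bar>e gchoose n\<bar> * \<bar>z\<bar> ^ n)"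
proof -
  have "summable (\<lambda>n. (e gchoose n) * ((1 + \<bar>z\<bar>) / 2) ^ n)"
    using gen_binomial_real[of "(1 + \<bar>z\<bar>) / 2" e] assms by (auto simp: sums_iff)
  from powser_insidea[OF this, of "\<bar>z\<bar>"] assms show ?thesis
    by (simp add: abs_mult power_abs)
qed

lemma nn_integral_Beta:
  fixes a b :: real
  assumes "a > 0" "b > 0"
  shows "(\<integral>\<^sup>+t. ennreal (indicator {0..1} t * (t powr (a - 1) * (1 - t) powr (b - 1))) \<partial>lborel)
      = ennreal (Beta a b)"
  by (rule nn_integral_has_integral_lebesgue[OF _ has_integral_Beta_real[OF assms]]) auto

lemma Beta_lborel:
  fixes a b :: real
  assumes "a > 0" "b > 0"
  shows "integrable lborel (\<lambda>t. indicator {0..1} t * (t powr (a - 1) * (1 - t) powr (b - 1)))"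
    and "(\<integral>t. indicator {0..1} t * (t powr (a - 1) * (1 - t) powr (b - 1)) \<partial>lborel) = Beta a b"
proof -
  have "Beta a b \<ge> 0"
    using assms by (simp add: Beta_def)
  with nn_integral_Beta[OF assms]
  show "integrable lborel (\<lambda>t. indicator {0..1} t * (t powr (a - 1) * (1 - t) powr (b - 1)))"
    and "(\<integral>t. indicator {0..1} t * (t powr (a - 1) * (1 - t) powr (b - 1)) \<partial>lborel) = Beta a b"
    by (auto simp: nn_integral_eq_integrable)
qed

lemma nn_integral_powr_power:
  fixes e :: real
  assumes "e > -1"
  shows "(\<integral>\<^sup>+t. ennreal (indicator {0..1} t * (t powr e * t ^ m)) \<partial>lborel) = ennreal (1 / (e + real m + 1))"
proof -
  have "t powr e * t ^ m = t powr (e + real m)" if "t \<ge> 0" for t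
    using that by (cases "t = 0") (auto simp: powr_add powr_realpow)
  then have "(\<integral>\<^sup>+t. ennreal (indicator {0..1} t * (t powr e * t ^ m)) \<partial>lborel) =
      (\<integral>\<^sup>+t. ennreal (indicator {0..1} t * t powr (e + real m)) \<partial>lborel)"
    by (intro nn_integral_cong) (simp add: indicator_def)
  also have "\<dots> = ennreal (1 powr (e + real m + 1) / (e + real m + 1))"
    using assms by (intro nn_integral_has_integral_lebesgue has_integral_powr_from_0) auto
  finally show ?thesis
    by simp
qed

lemma summable_abs_mult_even_power:
  fixes c :: "nat \<Rightarrow> real" and x :: real
  assumes summable: "summable (\<lambda>n. \<bar>c n\<bar> / (2 * real n + 1))" and x: "\<bar>x\<bar> < 1"
  shows "summable (\<lambda>n. \<bar>c n\<bar> * x ^ (2 * n))"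
proof -
  have x2: "0 \<le> x\<^sup>2" "x\<^sup>2 < 1"
    using x by (auto simp: abs_square_less_1)
  have "(\<lambda>n. 2 * (real n * (x\<^sup>2) ^ n) + (x\<^sup>2) ^ n) \<longlonglongrightarrow> 2 * 0 + 0"
    using x2 by (intro tendsto_intros powser_times_n_limit_0 LIMSEQ_power_zero) auto
  then have "eventually (\<lambda>n. (2 * real n + 1) * (x\<^sup>2) ^ n < 1) sequentially"
    by (rule order_tendstoD(2)[THEN eventually_mono]) (simp_all add: algebra_simps)
  then have "eventually (\<lambda>n. norm (\<bar>c n\<bar> * x ^ (2 * n)) \<le> \<bar>c n\<bar> / (2 * real n + 1)) sequentially"
  proof eventually_elim
    case (elim n)
    have "norm (\<bar>c n\<bar> * x ^ (2 * n)) = \<bar>c n\<bar> / (2 * real n + 1) * ((2 * real n + 1) * (x\<^sup>2) ^ n)"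
      by (simp add: abs_mult power_mult)
    also have "\<dots> \<le> \<bar>c n\<bar> / (2 * real n + 1) * 1"
      using elim by (intro mult_left_mono) auto
    finally show ?case
      by simp
  qed
  then show ?thesis
    using summable by (rule summable_comparison_test_ev)
qed

lemma sums_div_odd_integral:
  fixes c :: "nat \<Rightarrow> real"
  assumes summable: "summable (\<lambda>n. \<bar>c n\<bar> / (2 * real n + 1))"
  shows "integrable lborel (\<lambda>x. indicator {0..1} x * (\<Sum>n. c n * x ^ (2 * n)))"
    and "(\<lambda>n. c n / (2 * real n + 1)) sums (\<integral>x. indicator {0..1} x * (\<Sum>n. c n * x ^ (2 * n)) \<partial>lborel)"
proof -
  define f where "f n x = c n * (x ^ (2 * n) * indicator {0..1} x)" for n x
  have int: "integrable lborel (f n)" for n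
    using borel_integrable_atLeastAtMost'[of 0 1 "\<lambda>x. x ^ (2 * n)"]
    unfolding f_def set_integrable_def
    by (intro integrable_mult_right) (simp add: mult.commute continuous_intros)
  have integral: "integral\<^sup>L lborel (f n) = c n / (2 * real n + 1)" for n
    unfolding f_def integral_mult_right_zero integral_power[OF zero_le_one] by simp
  have "(\<integral>x. norm (f n x) \<partial>lborel) = \<bar>c n\<bar> / (2 * real n + 1)" for n
  proof -
    have "(\<lambda>x. norm (f n x)) = (\<lambda>x. \<bar>c n\<bar> * (x ^ (2 * n) * indicator {0..1} x))"
      unfolding f_def by (auto simp: indicator_def abs_mult)
    then show ?thesis
      by (simp add: integral_power)
  qed
  then have norm_summable: "summable (\<lambda>n. \<integral>x. norm (f n x) \<partial>lborel)"
    using summable by simp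
  have pointwise_summable: "AE x in lborel. summable (\<lambda>n. norm (f n x))"
    using AE_lborel_singleton[of 1]
  proof eventually_elim
    case (elim x)
    show ?case
    proof (cases "x \<in> {0..1}")
      case True
      with elim have "\<bar>x\<bar> < 1"
        by auto
      from summable_abs_mult_even_power[OF summable this] show ?thesis
        using True by (simp add: f_def abs_mult)
    qed (simp add: f_def)
  qed
  have sum_eq: "(\<lambda>x. \<Sum>n. f n x) = (\<lambda>x. indicator {0..1} x * (\<Sum>n. c n * x ^ (2 * n)))"
    unfolding f_def by (auto simp: indicator_def)
  show "integrable lborel (\<lambda>x. indicator {0..1} x * (\<Sum>n. c n * x ^ (2 * n)))"
    using integrable_suminf[OF int pointwise_summable norm_summable] unfolding sum_eq .
  have "summable (\<lambda>n. norm (c n / (2 * real n + 1)))"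
    using summable by (simp add: abs_divide)
  then have "summable (\<lambda>n. c n / (2 * real n + 1))"
    by (rule summable_norm_cancel)
  then show "(\<lambda>n. c n / (2 * real n + 1)) sums (\<integral>x. indicator {0..1} x * (\<Sum>n. c n * x ^ (2 * n)) \<partial>lborel)"
    using integral_suminf[OF int pointwise_summable norm_summable]
    unfolding sum_eq integral by (simp add: sums_iff)
qed

lemma summable_abs_gbinomial_Beta:
  fixes a e z :: real
  assumes a: "a > 0" and z: "\<bar>z\<bar> < 1"
  shows "summable (\<lambda>n. \<bar>e gchoose n\<bar> * Beta a (real n + 1) * \<bar>z\<bar> ^ n)"
proof (rule summable_comparison_test'[OF summable_mult[OF summable_abs_gbinomial[OF z], of "1 / a"]])
  fix n
  have "Beta a (real n + 1) \<ge> 0"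
    using a by (simp add: Beta_def)
  then have "norm (\<bar>e gchoose n\<bar> * Beta a (real n + 1) * \<bar>z\<bar> ^ n) = \<bar>e gchoose n\<bar> * \<bar>z\<bar> ^ n * Beta a (real n + 1)"
    by (simp add: abs_mult)
  also have "\<dots> \<le> \<bar>e gchoose n\<bar> * \<bar>z\<bar> ^ n * (1 / a)"
    using Beta_real_mono[of a a 1 "real n + 1"] Beta_one_right[OF a] a by (intro mult_left_mono) auto
  finally show "norm (\<bar>e gchoose n\<bar> * Beta a (real n + 1) * \<bar>z\<bar> ^ n) \<le> 1 / a * (\<bar>e gchoose n\<bar> * \<bar>z\<bar> ^ n)"
    by (simp add: mult_ac)
qed

lemma gbinomial_Beta_sums:
  fixes a e z :: real
  assumes a: "a > 0" and z: "0 \<le> z" "z < 1"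
  shows "integrable lborel (\<lambda>w. indicator {0..1} w * (w powr (a - 1) * (1 + (1 - w) * z) powr e))"
    and "(\<lambda>n. (e gchoose n) * Beta a (real n + 1) * z ^ n) sums
       (\<integral>w. indicator {0..1} w * (w powr (a - 1) * (1 + (1 - w) * z) powr e) \<partial>lborel)"
proof -
  define f where "f n w = (e gchoose n) * z ^ n *
       (indicator {0..1} w * (w powr (a - 1) * (1 - w) powr (real n + 1 - 1)))" for n w
  have int: "integrable lborel (f n)" for n
    unfolding f_def using Beta_lborel(1)[of a "real n + 1"] a by (intro integrable_mult_right) simp
  have integral: "integral\<^sup>L lborel (f n) = (e gchoose n) * Beta a (real n + 1) * z ^ n" for n
    unfolding f_def integral_mult_right_zero using Beta_lborel(2)[of a "real n + 1"] a
    by (simp add: mult_ac)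
  have Beta_nonneg: "Beta a (real n + 1) \<ge> 0" for n
    using a by (simp add: Beta_def)
  have integral_norm: "(\<integral>w. norm (f n w) \<partial>lborel) = norm ((e gchoose n) * Beta a (real n + 1) * z ^ n)" for n
  proof -
    have "(\<lambda>w. norm (f n w)) = (\<lambda>w. \<bar>e gchoose n\<bar> * z ^ n *
        (indicator {0..1} w * (w powr (a - 1) * (1 - w) powr (real n + 1 - 1))))"
      unfolding f_def using z by (auto simp: indicator_def abs_mult)
    then show ?thesis
      using Beta_lborel(2)[of a "real n + 1"] Beta_nonneg[of n] a z by (simp add: abs_mult)
  qed
  have summable: "summable (\<lambda>n. norm ((e gchoose n) * Beta a (real n + 1) * z ^ n))"
    using summable_abs_gbinomial_Beta[OF a, of z e] z Beta_nonneg by (simp add: abs_mult)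
  then have norm_summable: "summable (\<lambda>n. \<integral>w. norm (f n w) \<partial>lborel)"
    by (simp only: integral_norm)
  have pointwise_summable: "AE w in lborel. summable (\<lambda>n. norm (f n w))"
  proof (rule AE_I2)
    fix w
    have bound: "norm (f n w) \<le> w powr (a - 1) * (\<bar>e gchoose n\<bar> * z ^ n)" if "0 \<le> w" "w \<le> 1" for n
    proof -
      have "norm (f n w) = \<bar>e gchoose n\<bar> * z ^ n * w powr (a - 1) * (1 - w) powr real n"
        using that z by (simp add: f_def abs_mult mult_ac)
      also have "\<dots> \<le> \<bar>e gchoose n\<bar> * z ^ n * w powr (a - 1) * 1"
        using that z by (intro mult_left_mono powr_le1) auto
      finally show ?thesis
        by (simp add: mult_ac)
    qed
    have gbinomial: "summable (\<lambda>n. w powr (a - 1) * (\<bar>e gchoose n\<bar> * z ^ n))"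
      using summable_abs_gbinomial[of z e] z by (intro summable_mult) simp
    show "summable (\<lambda>n. norm (f n w))"
    proof (cases "w \<in> {0..1}")
      case True
      show ?thesis
        by (rule summable_comparison_test'[OF gbinomial]) (use bound True in auto)
    qed (simp add: f_def)
  qed
  have sum_eq: "AE w in lborel. (\<Sum>n. f n w) = indicator {0..1} w * (w powr (a - 1) * (1 + (1 - w) * z) powr e)"
    using AE_lborel_singleton[of 0] AE_lborel_singleton[of 1]
  proof eventually_elim
    case (elim w)
    show ?case
    proof (cases "w \<in> {0..1}")
      case False
      then show ?thesis
        unfolding f_def by simp
    next
      case True
      with elim have w: "0 < w" "w < 1"
        by auto
      have "\<bar>(1 - w) * z\<bar> < 1"
        using w z mult_left_le_one_le[of z "1 - w"] by (auto simp: abs_mult)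
      from sums_mult[OF gen_binomial_real[OF this, of e], of "w powr (a - 1)"]
      have "(\<lambda>n. f n w) sums (w powr (a - 1) * (1 + (1 - w) * z) powr e)"
        using w by (simp add: f_def powr_realpow power_mult_distrib mult_ac)
      then show ?thesis
        using True by (simp add: sums_iff)
    qed
  qed
  have "integrable lborel (\<lambda>w. \<Sum>n. f n w)"
    by (rule integrable_suminf[OF int pointwise_summable norm_summable])
  then show integrable: "integrable lborel
      (\<lambda>w. indicator {0..1} w * (w powr (a - 1) * (1 + (1 - w) * z) powr e))"
    by (rule integrable_cong_AE_imp[OF _ _ sum_eq]) measurable
  have "(\<lambda>n. (e gchoose n) * Beta a (real n + 1) * z ^ n) sums (\<integral>w. (\<Sum>n. f n w) \<partial>lborel)"
    using integral_suminf[OF int pointwise_summable norm_summable] summable_norm_cancel[OF summable]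
    by (simp add: integral sums_iff)
  also have "(\<integral>w. (\<Sum>n. f n w) \<partial>lborel) =
      (\<integral>w. indicator {0..1} w * (w powr (a - 1) * (1 + (1 - w) * z) powr e) \<partial>lborel)"
    by (rule integral_cong_AE[OF _ _ sum_eq]) (auto simp: f_def)
  finally show "(\<lambda>n. (e gchoose n) * Beta a (real n + 1) * z ^ n) sums
       (\<integral>w. indicator {0..1} w * (w powr (a - 1) * (1 + (1 - w) * z) powr e) \<partial>lborel)" .
qed

lemma hypergeom_numerator_eq_integral:
  fixes e :: real
  assumes e: "e > -1"
  defines "I \<equiv> \<lambda>x. \<integral>w. indicator {0..1} w * (w powr e * (1 + (1 - w) * x\<^sup>2) powr e) \<partial>lborel"
  shows "integrable lborel (\<lambda>x. indicator {0..1} x * I x)"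
    and "hypergeom [-e, 1/2, 1] [3/2, 2 + e] (-1) = (e + 1) * (\<integral>x. indicator {0..1} x * I x \<partial>lborel)"
proof -
  define a where "a n = (e gchoose n) * ((e + 1) * Beta (e + 1) (real n + 1))" for n
  have "\<bar>a n\<bar> / (2 * real n + 1) \<le> \<bar>pochhammer (-e) n / pochhammer (2 + e) n\<bar> / (real n + 1)" for n
  proof -
    have "(e + 1) * Beta (e + 1) (real n + 1) = fact n / pochhammer (2 + e) n"
      using fact_over_pochhammer_eq_Beta[of "e + 1" n] e by (simp add: add_ac)
    then have "\<bar>a n\<bar> = \<bar>pochhammer (-e) n / pochhammer (2 + e) n\<bar>"
      unfolding a_def by (simp add: gbinomial_pochhammer abs_mult)
    moreover have "\<bar>a n\<bar> / (2 * real n + 1) \<le> \<bar>a n\<bar> / (real n + 1)"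
      by (rule divide_left_mono) auto
    ultimately show ?thesis
      by simp
  qed
  moreover have "summable (\<lambda>n. \<bar>pochhammer (-e) n / pochhammer (2 + e) n\<bar> / (real n + 1))"
    using summable_abs_pochhammer_ratio[of "2 + e" "-e"] e by simp
  ultimately have "summable (\<lambda>n. \<bar>a n\<bar> / (2 * real n + 1))"
    by (intro summable_comparison_test'[where N = 0, of _ "\<lambda>n. \<bar>a n\<bar> / (2 * real n + 1)"]) auto
  note odd_series = sums_div_odd_integral[OF this]
  have series: "(\<lambda>n. a n * x ^ (2 * n)) sums ((e + 1) * I x)" if "0 \<le> x" "x < 1" for x
  proof -
    have "0 \<le> x\<^sup>2" "x\<^sup>2 < 1"
      using that by (auto simp: power_less_one_iff)
    from sums_mult[OF gbinomial_Beta_sums(2)[OF _ this, of "e + 1" e], of "e + 1"] show ?thesis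
      using e by (simp add: a_def I_def mult_ac flip: power_mult)
  qed
  have "AE x in lborel. indicator {0..1} x * (\<Sum>n. a n * x ^ (2 * n)) = (e + 1) * (indicator {0..1} x * I x)"
    using AE_lborel_singleton[of 1]
  proof eventually_elim
    case (elim x)
    show ?case
      using series[of x] elim by (cases "x \<in> {0..1}") (auto simp: sums_iff)
  qed
  note cong = integrable_cong_AE_imp[OF odd_series(1) _ this] integral_cong_AE[OF _ _ this]
  have measurable: "(\<lambda>x. indicator {0..1} x * I x) \<in> borel_measurable lborel"
    unfolding I_def by measurable
  show "integrable lborel (\<lambda>x. indicator {0..1} x * I x)"
    using cong(1) measurable e by simp
  show "hypergeom [-e, 1/2, 1] [3/2, 2 + e] (-1) = (e + 1) * (\<integral>x. indicator {0..1} x * I x \<partial>lborel)"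
    using hypergeom_numerator_eq_series[OF e] odd_series(2) cong(2) measurable
    by (simp add: a_def sums_iff)
qed

lemma nn_integral_subst_quadratic:
  fixes e s :: real
  assumes s: "0 \<le> s" "s < 1"
  shows "(\<integral>\<^sup>+w. ennreal (indicator {0..1} w * (w powr e * (1 + (1 - w) * s) powr e)) \<partial>lborel) =
         (\<integral>\<^sup>+t. ennreal (indicator {0..1} t * (t powr e / sqrt ((1 + s)\<^sup>2 - 4 * s * t))) \<partial>lborel)"
proof -
  (* t = g w maps [0,1] onto itself, and (1 + s)^2 - 4 s (g w) = (g' w)^2 *)
  define g where "g w = w * (1 + (1 - w) * s)" for w :: real
  define g' where "g' w = 1 + s - 2 * w * s" for w :: real
  define f where "f t = t powr e / sqrt ((1 + s)\<^sup>2 - 4 * s * t)" for t :: real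
  have g'_pos: "g' w > 0" if "w \<in> {0..1}" for w
    using that s mult_left_le_one_le[of s w] unfolding g'_def by auto
  have "(\<integral>\<^sup>+t. ennreal (f t * indicator {g 0..g 1} t) \<partial>lborel) =
        (\<integral>\<^sup>+w. ennreal (f (g w) * g' w * indicator {0..1} w) \<partial>lborel)"
  proof (rule nn_integral_substitution)
    show "(g has_real_derivative g' w) (at w)" for w
      unfolding g_def g'_def by (auto intro!: derivative_eq_intros simp: algebra_simps)
    show "0 \<le> g' w" if "w \<in> {0..1}" for w
      using g'_pos[OF that] by simp
  qed (auto simp: f_def g'_def set_borel_measurable_def intro!: continuous_intros)
  also have "\<dots> = (\<integral>\<^sup>+w. ennreal (indicator {0..1} w * (w powr e * (1 + (1 - w) * s) powr e)) \<partial>lborel)"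
  proof (rule nn_integral_cong)
    fix w :: real
    show "ennreal (f (g w) * g' w * indicator {0..1} w) =
        ennreal (indicator {0..1} w * (w powr e * (1 + (1 - w) * s) powr e))"
    proof (cases "w \<in> {0..1}")
      case True
      have "(1 + s)\<^sup>2 - 4 * s * g w = (g' w)\<^sup>2"
        unfolding g_def g'_def by (simp add: algebra_simps power2_eq_square)
      then have "f (g w) * g' w = g w powr e"
        unfolding f_def using g'_pos[OF True] by simp
      also have "\<dots> = w powr e * (1 + (1 - w) * s) powr e"
        unfolding g_def using True s by (simp add: powr_mult)
      finally show ?thesis
        using True by simp
    qed simp
  qed
  finally show ?thesis
    by (simp add: f_def g_def mult.commute)
qed

lemma nn_integral_swap_quadratic:
  fixes e :: real
  shows "(\<integral>\<^sup>+x. ennreal (indicator {0..1} x) *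
            (\<integral>\<^sup>+w. ennreal (indicator {0..1} w * (w powr e * (1 + (1 - w) * x\<^sup>2) powr e)) \<partial>lborel) \<partial>lborel)
       = (\<integral>\<^sup>+t. ennreal (indicator {0..1} t * t powr e) *
            (\<integral>\<^sup>+x. ennreal (indicator {0..1} x / sqrt ((1 + x\<^sup>2)\<^sup>2 - 4 * x\<^sup>2 * t)) \<partial>lborel) \<partial>lborel)"
proof -
  define F where "F x t = ennreal (indicator {0..1} x *
      (indicator {0..1} t * (t powr e / sqrt ((1 + x\<^sup>2)\<^sup>2 - 4 * x\<^sup>2 * t))))" for x t :: real
  have "(\<integral>\<^sup>+x. ennreal (indicator {0..1} x) *
            (\<integral>\<^sup>+w. ennreal (indicator {0..1} w * (w powr e * (1 + (1 - w) * x\<^sup>2) powr e)) \<partial>lborel) \<partial>lborel)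
      = (\<integral>\<^sup>+x. \<integral>\<^sup>+t. F x t \<partial>lborel \<partial>lborel)"
  proof (rule nn_integral_cong_AE)
    show "AE x in lborel. ennreal (indicator {0..1} x) *
            (\<integral>\<^sup>+w. ennreal (indicator {0..1} w * (w powr e * (1 + (1 - w) * x\<^sup>2) powr e)) \<partial>lborel)
          = (\<integral>\<^sup>+t. F x t \<partial>lborel)"
      using AE_lborel_singleton[of 1]
    proof eventually_elim
      case (elim x)
      show ?case
      proof (cases "x \<in> {0..1}")
        case True
        then have "0 \<le> x\<^sup>2" "x\<^sup>2 < 1"
          using elim by (auto simp: power_less_one_iff)
        from nn_integral_subst_quadratic[OF this] show ?thesis
          unfolding F_def using True by simp
      qed (simp add: F_def)
    qed
  qed
  also have "\<dots> = (\<integral>\<^sup>+t. \<integral>\<^sup>+x. F x t \<partial>lborel \<partial>lborel)"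
    by (rule lborel_pair.Fubini'[symmetric]) (unfold F_def, measurable)
  also have "\<dots> = (\<integral>\<^sup>+t. ennreal (indicator {0..1} t * t powr e) *
            (\<integral>\<^sup>+x. ennreal (indicator {0..1} x / sqrt ((1 + x\<^sup>2)\<^sup>2 - 4 * x\<^sup>2 * t)) \<partial>lborel) \<partial>lborel)"
  proof (rule nn_integral_cong)
    fix t :: real
    have "(\<integral>\<^sup>+x. F x t \<partial>lborel) = (\<integral>\<^sup>+x. ennreal (indicator {0..1} t * t powr e) *
        ennreal (indicator {0..1} x / sqrt ((1 + x\<^sup>2)\<^sup>2 - 4 * x\<^sup>2 * t)) \<partial>lborel)"
      unfolding F_def by (intro nn_integral_cong) (simp add: ennreal_mult'[symmetric] mult_ac)
    also have "\<dots> = ennreal (indicator {0..1} t * t powr e) *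
        (\<integral>\<^sup>+x. ennreal (indicator {0..1} x / sqrt ((1 + x\<^sup>2)\<^sup>2 - 4 * x\<^sup>2 * t)) \<partial>lborel)"
      by (rule nn_integral_cmult) measurable
    finally show "(\<integral>\<^sup>+x. F x t \<partial>lborel) = ennreal (indicator {0..1} t * t powr e) *
        (\<integral>\<^sup>+x. ennreal (indicator {0..1} x / sqrt ((1 + x\<^sup>2)\<^sup>2 - 4 * x\<^sup>2 * t)) \<partial>lborel)" .
  qed
  finally show ?thesis .
qed

lemma power2_powr_minus_half:
  fixes c :: real
  assumes "c > 0"
  shows "(c\<^sup>2) powr (-1/2) = 1 / c"
  using assms by (simp add: powr_minus_divide powr_half_sqrt)

(* Its integral over [0,1] is K(sqrt t)/2, K the complete elliptic integral of the first kind. *)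
definition elliptic_kernel :: "real \<Rightarrow> real \<Rightarrow> real" where
  "elliptic_kernel t y = y powr (-1/2) * (1 - y) powr (-1/2) * (1 - t * y) powr (-1/2) / 4"

lemma elliptic_kernel_subst:
  fixes t x :: real
  assumes t: "0 \<le> t" "t < 1" and x: "0 < x" "x < 1"
  shows "elliptic_kernel t (4 * x\<^sup>2 / (1 + x\<^sup>2)\<^sup>2) * (8 * x * (1 - x\<^sup>2) / (1 + x\<^sup>2) ^ 3)
       = 1 / sqrt ((1 + x\<^sup>2)\<^sup>2 - 4 * x\<^sup>2 * t)"
proof -
  define q where "q = 1 + x\<^sup>2"
  define D where "D = q\<^sup>2 - 4 * x\<^sup>2 * t"
  have x2: "0 < x\<^sup>2" "x\<^sup>2 < 1"
    using x by (auto simp: power_less_one_iff)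
  then have q: "q > 0"
    unfolding q_def by linarith
  have "x\<^sup>2 * t \<le> x\<^sup>2"
    using x2 t mult_left_le[of t "x\<^sup>2"] by simp
  then have "D \<ge> (1 - x\<^sup>2)\<^sup>2"
    unfolding D_def q_def by (simp add: algebra_simps power2_eq_square)
  moreover have "(1 - x\<^sup>2)\<^sup>2 > 0"
    using x2 by simp
  ultimately have D: "sqrt D > 0"
    by (metis less_le_trans real_sqrt_gt_0_iff)
  have "4 * x\<^sup>2 / q\<^sup>2 = (2 * x / q)\<^sup>2"
    by (simp add: power2_eq_square)
  moreover have "1 - 4 * x\<^sup>2 / q\<^sup>2 = ((1 - x\<^sup>2) / q)\<^sup>2"
  proof -
    have "1 - 4 * x\<^sup>2 / q\<^sup>2 = (q\<^sup>2 - 4 * x\<^sup>2) / q\<^sup>2"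
      using q by (simp add: field_simps)
    also have "q\<^sup>2 - 4 * x\<^sup>2 = (1 - x\<^sup>2)\<^sup>2"
      unfolding q_def by (simp add: algebra_simps power2_eq_square)
    finally show ?thesis
      by (simp add: power_divide)
  qed
  moreover have "1 - t * (4 * x\<^sup>2 / q\<^sup>2) = (sqrt D / q)\<^sup>2"
    using q D unfolding D_def by (simp add: field_simps power2_eq_square)
  moreover have "2 * x / q > 0" "(1 - x\<^sup>2) / q > 0" "sqrt D / q > 0"
    using q x x2 D by auto
  ultimately have "elliptic_kernel t (4 * x\<^sup>2 / q\<^sup>2) = q / (2 * x) * (q / (1 - x\<^sup>2)) * (q / sqrt D) / 4"
    unfolding elliptic_kernel_def by (simp only: power2_powr_minus_half) simp
  also have "\<dots> * (8 * x * (1 - x\<^sup>2) / q ^ 3) = 1 / sqrt D"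
    using q x x2 D by (simp add: field_simps power3_eq_cube)
  finally show ?thesis
    unfolding q_def D_def .
qed

lemma nn_integral_elliptic_kernel_subst:
  fixes t :: real
  assumes t: "0 \<le> t" "t < 1"
  shows "(\<integral>\<^sup>+x. ennreal (indicator {0..1} x / sqrt ((1 + x\<^sup>2)\<^sup>2 - 4 * x\<^sup>2 * t)) \<partial>lborel) =
         (\<integral>\<^sup>+y. ennreal (indicator {0..1} y * elliptic_kernel t y) \<partial>lborel)"
proof -
  define g where "g x = 4 * x\<^sup>2 / (1 + x\<^sup>2)\<^sup>2" for x :: real
  define g' where "g' x = 8 * x * (1 - x\<^sup>2) / (1 + x\<^sup>2) ^ 3" for x :: real
  have "(\<integral>\<^sup>+y. ennreal (elliptic_kernel t y * indicator {g 0..g 1} y) \<partial>lborel) =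
        (\<integral>\<^sup>+x. ennreal (elliptic_kernel t (g x) * g' x * indicator {0..1} x) \<partial>lborel)"
  proof (rule nn_integral_substitution)
    show "(g has_real_derivative g' x) (at x)" for x
    proof -
      define q where "q = 1 + x\<^sup>2"
      have q: "q \<noteq> 0"
        unfolding q_def using zero_le_power2[of x] by linarith
      have "(g has_real_derivative (8 * x * q\<^sup>2 - 4 * x\<^sup>2 * (2 * q * (2 * x))) / (q\<^sup>2 * q\<^sup>2)) (at x)"
        using q unfolding g_def q_def by (auto intro!: derivative_eq_intros simp: power2_eq_square)
      moreover have "(8 * x * q\<^sup>2 - 4 * x\<^sup>2 * (2 * q * (2 * x))) / (q\<^sup>2 * q\<^sup>2) = 8 * x * (q - 2 * x\<^sup>2) / q ^ 3"
        using q by (simp add: field_simps power2_eq_square power3_eq_cube)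
      ultimately show ?thesis
        unfolding g'_def q_def by simp
    qed
    show "continuous_on {0..1} g'"
      unfolding g'_def by (intro continuous_intros) (auto simp: add_nonneg_eq_0_iff)
    show "0 \<le> g' x" if "x \<in> {0..1}" for x
      using that power_le_one[of x 2] unfolding g'_def by auto
  qed (simp_all add: elliptic_kernel_def set_borel_measurable_def)
  also have "\<dots> = (\<integral>\<^sup>+x. ennreal (indicator {0..1} x / sqrt ((1 + x\<^sup>2)\<^sup>2 - 4 * x\<^sup>2 * t)) \<partial>lborel)"
  proof (intro nn_integral_cong_AE)
    show "AE x in lborel. ennreal (elliptic_kernel t (g x) * g' x * indicator {0..1} x) =
        ennreal (indicator {0..1} x / sqrt ((1 + x\<^sup>2)\<^sup>2 - 4 * x\<^sup>2 * t))"
      using AE_lborel_singleton[of 0] AE_lborel_singleton[of 1]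
    proof eventually_elim
      case (elim x)
      show ?case
      proof (cases "x \<in> {0..1}")
        case True
        with elim have "0 < x" "x < 1"
          by auto
        from elliptic_kernel_subst[OF t this] show ?thesis
          using True by (simp add: g_def g'_def)
      qed simp
    qed
  qed
  finally show ?thesis
    by (simp add: g_def mult.commute)
qed

lemma nn_integral_elliptic_kernel:
  fixes t :: real
  assumes t: "0 \<le> t" "t < 1"
  shows "(\<integral>\<^sup>+y. ennreal (indicator {0..1} y * elliptic_kernel t y) \<partial>lborel)
       = (\<Sum>m. ennreal (pi / 4 * invsqrt_coeff m ^ 2 * t ^ m))"
proof -
  define h where "h m y = indicator {0..1} y * (invsqrt_coeff m * t ^ m / 4) *
      (y powr (real m + 1/2 - 1) * (1 - y) powr (1/2 - 1))" for m y
  have h_nonneg: "h m y \<ge> 0" for m y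
    unfolding h_def using t invsqrt_coeff_nonneg[of m] by (auto simp: indicator_def)
  have "AE y in lborel. ennreal (indicator {0..1} y * elliptic_kernel t y) = (\<Sum>m. ennreal (h m y))"
    using AE_lborel_singleton[of 0] AE_lborel_singleton[of 1]
  proof eventually_elim
    case (elim y)
    show ?case
    proof (cases "y \<in> {0..1}")
      case True
      with elim have y: "0 < y" "y < 1"
        by auto
      have "\<bar>t * y\<bar> < 1"
        using t y mult_strict_mono[of t 1 y 1] by auto
      from sums_mult[OF invsqrt_coeff_sums[OF this], of "y powr (-1/2) * (1 - y) powr (-1/2) / 4"]
      have "(\<lambda>m. y powr (-1/2) * (1 - y) powr (-1/2) / 4 * (invsqrt_coeff m * (t * y) ^ m)) sums
          (indicator {0..1} y * elliptic_kernel t y)"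
        using y by (simp add: elliptic_kernel_def mult_ac)
      moreover have "y powr (real m + 1/2 - 1) = y ^ m * y powr (-1/2)" for m
        using y by (simp add: powr_add[symmetric] powr_realpow[symmetric])
      ultimately have "(\<lambda>m. h m y) sums (indicator {0..1} y * elliptic_kernel t y)"
        using True by (simp add: h_def power_mult_distrib mult_ac)
      then show ?thesis
        by (rule suminf_ennreal_eq[symmetric, OF h_nonneg])
    qed (simp add: h_def)
  qed
  then have "(\<integral>\<^sup>+y. ennreal (indicator {0..1} y * elliptic_kernel t y) \<partial>lborel)
      = (\<Sum>m. \<integral>\<^sup>+y. ennreal (h m y) \<partial>lborel)"
    by (simp add: nn_integral_cong_AE nn_integral_suminf h_def)
  also have "\<dots> = (\<Sum>m. ennreal (pi / 4 * invsqrt_coeff m ^ 2 * t ^ m))"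
  proof (rule suminf_cong)
    fix m
    have c: "0 \<le> invsqrt_coeff m * t ^ m / 4"
      using t invsqrt_coeff_nonneg[of m] by simp
    have "(\<integral>\<^sup>+y. ennreal (h m y) \<partial>lborel) = ennreal (invsqrt_coeff m * t ^ m / 4) *
        (\<integral>\<^sup>+y. ennreal (indicator {0..1} y * (y powr (real m + 1/2 - 1) * (1 - y) powr (1/2 - 1))) \<partial>lborel)"
      unfolding h_def using c
      by (subst nn_integral_cmult[symmetric]) (auto intro!: nn_integral_cong simp: ennreal_mult'[symmetric] mult_ac)
    also have "\<dots> = ennreal (invsqrt_coeff m * t ^ m / 4 * Beta (real m + 1/2) (1/2))"
      using nn_integral_Beta[of "real m + 1/2" "1/2"] ennreal_mult'[OF c] by simp
    finally show "(\<integral>\<^sup>+y. ennreal (h m y) \<partial>lborel) = ennreal (pi / 4 * invsqrt_coeff m ^ 2 * t ^ m)"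
      by (simp add: Beta_nat_plus_half_half power2_eq_square mult_ac)
  qed
  finally show ?thesis .
qed

lemma nn_integral_elliptic_moment:
  fixes e :: real
  assumes e: "e > -1"
  shows "(\<integral>\<^sup>+t. ennreal (indicator {0..1} t * t powr e) *
            (\<integral>\<^sup>+x. ennreal (indicator {0..1} x / sqrt ((1 + x\<^sup>2)\<^sup>2 - 4 * x\<^sup>2 * t)) \<partial>lborel) \<partial>lborel)
         = (\<Sum>m. ennreal (pi / 4 * invsqrt_coeff m ^ 2 / (e + real m + 1)))"
proof -
  have "AE t in lborel. ennreal (indicator {0..1} t * t powr e) *
          (\<integral>\<^sup>+x. ennreal (indicator {0..1} x / sqrt ((1 + x\<^sup>2)\<^sup>2 - 4 * x\<^sup>2 * t)) \<partial>lborel)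
        = (\<Sum>m. ennreal (pi / 4 * invsqrt_coeff m ^ 2) * ennreal (indicator {0..1} t * (t powr e * t ^ m)))"
    using AE_lborel_singleton[of 1]
  proof eventually_elim
    case (elim t)
    show ?case
    proof (cases "t \<in> {0..1}")
      case True
      with elim have t: "0 \<le> t" "t < 1"
        by auto
      have "ennreal (t powr e) * ennreal (pi / 4 * invsqrt_coeff m ^ 2 * t ^ m) =
          ennreal (pi / 4 * invsqrt_coeff m ^ 2) * ennreal (t powr e * t ^ m)" for m
        using t by (simp add: ennreal_mult'[symmetric] mult_ac)
      then show ?thesis
        using True
        by (simp add: nn_integral_elliptic_kernel_subst[OF t] nn_integral_elliptic_kernel[OF t]
            flip: ennreal_suminf_cmult)
    qed simp
  qed
  then have "(\<integral>\<^sup>+t. ennreal (indicator {0..1} t * t powr e) *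
            (\<integral>\<^sup>+x. ennreal (indicator {0..1} x / sqrt ((1 + x\<^sup>2)\<^sup>2 - 4 * x\<^sup>2 * t)) \<partial>lborel) \<partial>lborel)
      = (\<Sum>m. \<integral>\<^sup>+t. ennreal (pi / 4 * invsqrt_coeff m ^ 2) * ennreal (indicator {0..1} t * (t powr e * t ^ m)) \<partial>lborel)"
    by (simp add: nn_integral_cong_AE nn_integral_suminf)
  also have "\<dots> = (\<Sum>m. ennreal (pi / 4 * invsqrt_coeff m ^ 2) * ennreal (1 / (e + real m + 1)))"
    by (simp add: nn_integral_cmult nn_integral_powr_power[OF e])
  also have "\<dots> = (\<Sum>m. ennreal (pi / 4 * invsqrt_coeff m ^ 2 / (e + real m + 1)))"
    by (simp add: ennreal_mult'[symmetric])
  finally show ?thesis .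
qed

lemma hypergeom_numerator_nn_integral:
  fixes e :: real
  assumes e: "e > -1"
  shows "hypergeom [-e, 1/2, 1] [3/2, 2 + e] (-1) \<ge> 0"
    and "ennreal (hypergeom [-e, 1/2, 1] [3/2, 2 + e] (-1)) = ennreal (e + 1) *
      (\<integral>\<^sup>+x. ennreal (indicator {0..1} x) *
        (\<integral>\<^sup>+w. ennreal (indicator {0..1} w * (w powr e * (1 + (1 - w) * x\<^sup>2) powr e)) \<partial>lborel) \<partial>lborel)"
proof -
  define I where "I x = (\<integral>w. indicator {0..1} w * (w powr e * (1 + (1 - w) * x\<^sup>2) powr e) \<partial>lborel)" for x
  note numerator = hypergeom_numerator_eq_integral[OF e, folded I_def]
  have I_nonneg: "I x \<ge> 0" for x
    unfolding I_def by (intro integral_nonneg_AE) auto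
  have integral_nonneg: "(\<integral>x. indicator {0..1} x * I x \<partial>lborel) \<ge> 0"
    by (intro integral_nonneg_AE) (simp add: I_nonneg)
  then show "hypergeom [-e, 1/2, 1] [3/2, 2 + e] (-1) \<ge> 0"
    using numerator(2) e by simp
  have "AE x in lborel. ennreal (indicator {0..1} x * I x) = ennreal (indicator {0..1} x) *
      (\<integral>\<^sup>+w. ennreal (indicator {0..1} w * (w powr e * (1 + (1 - w) * x\<^sup>2) powr e)) \<partial>lborel)"
    using AE_lborel_singleton[of 1]
  proof eventually_elim
    case (elim x)
    show ?case
    proof (cases "x \<in> {0..1}")
      case True
      with elim have "0 \<le> x\<^sup>2" "x\<^sup>2 < 1"
        by (auto simp: power_less_one_iff)
      from gbinomial_Beta_sums(1)[OF _ this, of "e + 1" e] e show ?thesis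
        using True by (simp add: I_def nn_integral_eq_integral)
    qed simp
  qed
  note inner = nn_integral_cong_AE[OF this]
  have "ennreal (\<integral>x. indicator {0..1} x * I x \<partial>lborel) =
      (\<integral>\<^sup>+x. ennreal (indicator {0..1} x * I x) \<partial>lborel)"
    by (rule nn_integral_eq_integral[symmetric, OF numerator(1)]) (simp add: I_nonneg)
  also note inner
  finally have outer: "ennreal (\<integral>x. indicator {0..1} x * I x \<partial>lborel) =
      (\<integral>\<^sup>+x. ennreal (indicator {0..1} x) *
        (\<integral>\<^sup>+w. ennreal (indicator {0..1} w * (w powr e * (1 + (1 - w) * x\<^sup>2) powr e)) \<partial>lborel) \<partial>lborel)" .
  show "ennreal (hypergeom [-e, 1/2, 1] [3/2, 2 + e] (-1)) = ennreal (e + 1) *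
      (\<integral>\<^sup>+x. ennreal (indicator {0..1} x) *
        (\<integral>\<^sup>+w. ennreal (indicator {0..1} w * (w powr e * (1 + (1 - w) * x\<^sup>2) powr e)) \<partial>lborel) \<partial>lborel)"
    unfolding numerator(2) outer[symmetric] using e integral_nonneg by (simp add: ennreal_mult)
qed

lemma hypergeom_numerator_sums:
  fixes e :: real
  assumes e: "e > -1"
  shows "(\<lambda>m. pi / 4 * (invsqrt_coeff m ^ 2 * ((1 + e) / (1 + e + real m))))
      sums hypergeom [-e, 1/2, 1] [3/2, 2 + e] (-1)"
proof -
  have "ennreal (hypergeom [-e, 1/2, 1] [3/2, 2 + e] (-1)) =
      ennreal (e + 1) * (\<Sum>m. ennreal (pi / 4 * invsqrt_coeff m ^ 2 / (e + real m + 1)))"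
    by (simp add: hypergeom_numerator_nn_integral(2)[OF e] nn_integral_swap_quadratic
        nn_integral_elliptic_moment[OF e])
  also have "\<dots> = (\<Sum>m. ennreal (pi / 4 * (invsqrt_coeff m ^ 2 * ((1 + e) / (1 + e + real m)))))"
  proof (subst ennreal_suminf_cmult[symmetric], rule suminf_cong)
    fix m
    have "(e + 1) * (pi / 4 * invsqrt_coeff m ^ 2 / (e + real m + 1))
        = pi / 4 * (invsqrt_coeff m ^ 2 * ((1 + e) / (1 + e + real m)))"
      by (simp add: add_ac)
    then show "ennreal (e + 1) * ennreal (pi / 4 * invsqrt_coeff m ^ 2 / (e + real m + 1))
        = ennreal (pi / 4 * (invsqrt_coeff m ^ 2 * ((1 + e) / (1 + e + real m))))"
      using e by (simp add: ennreal_mult'[symmetric])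
  qed
  finally have "(\<lambda>m. ennreal (pi / 4 * (invsqrt_coeff m ^ 2 * ((1 + e) / (1 + e + real m)))))
      sums ennreal (hypergeom [-e, 1/2, 1] [3/2, 2 + e] (-1))"
    using summable_sums[OF summableI, of "\<lambda>m. ennreal (pi / 4 * (invsqrt_coeff m ^ 2 * ((1 + e) / (1 + e + real m))))"]
    by simp
  then show ?thesis
    using hypergeom_numerator_nn_integral(1)[OF e] e by (subst (asm) sums_ennreal) auto
qed

theorem mainTheorem2:
  fixes \<eta> :: real
  assumes "\<eta> > -1"
  shows "pi / 4 =
    hypergeom [-\<eta>, 1/2, 1] [3/2, 2 + \<eta>] (-1) /
    hypergeom [1/2, 1/2, 1 + \<eta>] [1, 2 + \<eta>] 1"
proof -
  define b where "b m = invsqrt_coeff m ^ 2 * ((1 + \<eta>) / (1 + \<eta> + real m))" for m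
  define N where "N = hypergeom [-\<eta>, 1/2, 1] [3/2, 2 + \<eta>] (-1)"
  have "(\<lambda>m. pi / 4 * b m) sums N"
    unfolding b_def N_def by (rule hypergeom_numerator_sums[OF assms])
  from sums_mult[OF this, of "4 / pi"] have b_sums: "b sums (4 / pi * N)"
    by simp
  have denominator: "hypergeom [1/2, 1/2, 1 + \<eta>] [1, 2 + \<eta>] 1 = suminf b"
    unfolding b_def by (rule hypergeom_denominator_eq_series[OF assms])
  have "0 < suminf b"
    using b_sums assms by (intro suminf_pos2[where i = 0]) (auto simp: sums_iff b_def invsqrt_coeff_def)
  then have "N > 0"
    using b_sums pi_gt_zero by (simp add: sums_iff zero_less_mult_iff zero_less_divide_iff)
  then show ?thesis
    using b_sums by (simp add: denominator N_def sums_iff)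
qed

end
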